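(* Let $\Omega$ be a Polish space possessing a non-Borel subset $E\subset\Omega$ (e.g. $\Omega=\mathbb{R}$), and let $\mu$ be a Borel probability measure on $\Omega$. For $x\in E$ let $T_x:=\mathbb{1}_{\{x\}}\otimes\mu$, i.e. $T_x\nu=\nu(\{x\})\mu$. Then each $T_x$ is weakly continuous, the family $\{T_x:x\in E\}$ is bounded above by the weakly continuous operator $\mathbb{1}\otimes\mu$, but its supremum $\sup_{x\in E}T_x$ in $\mathscr{L}(\mathscr{M}(\Omega))$ is not weakly continuous. In particular $\mathscr{L}(\mathscr{M}(\Omega),\sigma)$ is not order complete in this sense.
   Context: $\mathscr{M}(\Omega)$ is the Banach lattice of finite signed Borel measures; $\mathscr{L}(\mathscr{M}(\Omega))$, the bounded operators on it ordered by positivity, is an order complete vector lattice. $T$ is weakly continuous if $(T\nu)(A)=\int k(x,A)\,d\nu(x)$ for a bounded transition kernel $k$ (map $\Omega\times\mathscr{B}(\Omega)\to\mathbb{R}$, signed measure in the second variable, Borel measurable in the first, $\sup_x\lvert k\rvert(x,\Omega)<\infty$); equivalently, the norm adjoint $T^*$ maps bounded Borel functions to bounded Borel functions. $\mathscr{L}(\mathscr{M}(\Omega),\sigma)$ is the space of weakly continuous operators; $(f\otimes\mu)\nu:=\left(\int f\,d\nu\right)\mu$. *)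

theory Defs
  imports "HOL-Probability.Probability"
begin

text \<open>Finite signed Borel measures, represented as real-valued set functions that are
countably additive on the Borel sets and vanish on non-Borel sets.\<close>
definition fsm :: "('a::topological_space set \<Rightarrow> real) set" where
  "fsm = {\<nu>. \<nu> {} = 0 \<and> (\<forall>A. A \<notin> sets (borel::'a measure) \<longrightarrow> \<nu> A = 0) \<and>
     (\<forall>F::nat \<Rightarrow> 'a set. range F \<subseteq> sets borel \<and> disjoint_family F \<longrightarrow>
        (\<lambda>n. \<nu> (F n)) sums \<nu> (\<Union>n. F n))}"

definition tvnorm :: "('a::topological_space set \<Rightarrow> real) \<Rightarrow> real" where
  "tvnorm \<nu> = Sup {(\<Sum>A\<in>P. \<bar>\<nu> A\<bar>) | P. finite P \<and> P \<subseteq> sets (borel::'a measure) \<and> disjoint P}"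

text \<open>Integral of a function against a finite signed Borel measure, via any decomposition
as a difference of two finite Borel measures (independent of the choice for bounded Borel f).\<close>
definition sint :: "('a::topological_space set \<Rightarrow> real) \<Rightarrow> ('a \<Rightarrow> real) \<Rightarrow> real" where
  "sint \<nu> f = (let (m1, m2) = (SOME (m1, m2). finite_measure m1 \<and> sets m1 = sets (borel::'a measure)
        \<and> finite_measure m2 \<and> sets m2 = sets (borel::'a measure)
        \<and> (\<forall>A\<in>sets (borel::'a measure). \<nu> A = measure m1 A - measure m2 A))
     in integral\<^sup>L m1 f - integral\<^sup>L m2 f)"

definition bounded_op :: "(('a::topological_space set \<Rightarrow> real) \<Rightarrow> ('a set \<Rightarrow> real)) \<Rightarrow> bool" where
  "bounded_op T \<longleftrightarrow> (\<forall>\<nu>\<in>fsm. T \<nu> \<in> fsm) \<and>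
     (\<forall>\<nu>\<in>fsm. \<forall>\<rho>\<in>fsm. \<forall>a b::real.
        T (\<lambda>A. a * \<nu> A + b * \<rho> A) = (\<lambda>A. a * T \<nu> A + b * T \<rho> A)) \<and>
     (\<exists>C. \<forall>\<nu>\<in>fsm. tvnorm (T \<nu>) \<le> C * tvnorm \<nu>)"

definition op_le :: "(('a::topological_space set \<Rightarrow> real) \<Rightarrow> ('a set \<Rightarrow> real)) \<Rightarrow>
    (('a set \<Rightarrow> real) \<Rightarrow> ('a set \<Rightarrow> real)) \<Rightarrow> bool" where
  "op_le S T \<longleftrightarrow> (\<forall>\<nu>\<in>fsm. (\<forall>A. 0 \<le> \<nu> A) \<longrightarrow> (\<forall>A. S \<nu> A \<le> T \<nu> A))"

definition is_op_sup :: "((('a::topological_space set \<Rightarrow> real) \<Rightarrow> ('a set \<Rightarrow> real)) set) \<Rightarrow>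
    (('a set \<Rightarrow> real) \<Rightarrow> ('a set \<Rightarrow> real)) \<Rightarrow> bool" where
  "is_op_sup F S \<longleftrightarrow> bounded_op S \<and> (\<forall>T\<in>F. op_le T S) \<and>
     (\<forall>U. bounded_op U \<and> (\<forall>T\<in>F. op_le T U) \<longrightarrow> op_le S U)"

definition bounded_kernel :: "('a::topological_space \<Rightarrow> 'a set \<Rightarrow> real) \<Rightarrow> bool" where
  "bounded_kernel k \<longleftrightarrow> (\<forall>x. k x \<in> fsm) \<and>
     (\<forall>A\<in>sets (borel::'a measure). (\<lambda>x. k x A) \<in> borel_measurable borel) \<and>
     (\<exists>C. \<forall>x. tvnorm (k x) \<le> C)"

definition weakly_cont :: "(('a::topological_space set \<Rightarrow> real) \<Rightarrow> ('a set \<Rightarrow> real)) \<Rightarrow> bool" where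
  "weakly_cont T \<longleftrightarrow> bounded_op T \<and> (\<exists>k. bounded_kernel k \<and>
     (\<forall>\<nu>\<in>fsm. \<forall>A\<in>sets (borel::'a measure). T \<nu> A = sint \<nu> (\<lambda>x. k x A)))"

definition tensor :: "('a::topological_space \<Rightarrow> real) \<Rightarrow> ('a set \<Rightarrow> real) \<Rightarrow>
    (('a set \<Rightarrow> real) \<Rightarrow> ('a set \<Rightarrow> real))" where
  "tensor f \<mu> = (\<lambda>\<nu> A. sint \<nu> f * \<mu> A)"

definition as_fsm :: "'a::topological_space measure \<Rightarrow> ('a set \<Rightarrow> real)" where
  "as_fsm m = (\<lambda>A. if A \<in> sets (borel::'a measure) then measure m A else 0)"

end

theory Submission
  imports Defs
begin

text \<open>The supremum of the operators \<open>T\<^sub>x = \<one>\<^sub>{\<^sub>x\<^sub>} \<otimes> \<mu>\<close> exists: it is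
  \<open>\<nu> \<mapsto> (\<Sum>\<^sub>x\<^sub>\<in>\<^sub>E \<nu>{x}) \<mu>\<close>, because splitting off the atoms of a positive measure one at a
  time shows that every upper bound \<open>U\<close> satisfies \<open>(\<Sum>\<^sub>x\<^sub>\<in>\<^sub>F \<nu>{x}) \<mu> \<le> U \<nu>\<close> for finite
  \<open>F \<subseteq> E\<close>. On a point mass \<open>\<delta>\<^sub>y\<close> any supremum \<open>S\<close> is squeezed between \<open>T\<^sub>y\<close> (or any
  \<open>T\<^sub>x\<close>) and this operator, so \<open>S \<delta>\<^sub>y (\<Omega>) = \<one>\<^sub>E(y)\<close>. If \<open>S\<close> were given by a bounded
  kernel \<open>k\<close>, then \<open>S \<delta>\<^sub>y = k(y, \<cdot>)\<close>, so \<open>\<one>\<^sub>E\<close> would be Borel measurable, although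
  \<open>E\<close> is not a Borel set. Evaluating \<open>S \<delta>\<^sub>y\<close> through the kernel requires integrals against
  signed measures to be independent of the chosen Jordan-type decomposition, which holds because
  any two decompositions \<open>m\<^sub>1 - m\<^sub>2 = n\<^sub>1 - n\<^sub>2\<close> give equal measures \<open>m\<^sub>1 + n\<^sub>2 = n\<^sub>1 + m\<^sub>2\<close>.\<close>

section \<open>Finite signed Borel measures\<close>

lemma fsmD:
  assumes "\<nu> \<in> fsm"
  shows fsm_empty: "\<nu> {} = 0"
    and fsm_nonborel: "A \<notin> sets (borel::'a::topological_space measure) \<Longrightarrow> \<nu> A = 0"
    and fsm_sums: "range F \<subseteq> sets (borel::'a measure) \<Longrightarrow> disjoint_family F \<Longrightarrow>
      (\<lambda>n. \<nu> (F n)) sums \<nu> (\<Union>n. F n)"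
  using assms unfolding fsm_def by auto

lemma fsm_Un:
  fixes \<nu> :: "'a::topological_space set \<Rightarrow> real"
  assumes "\<nu> \<in> fsm" "A \<in> sets borel" "B \<in> sets borel" "A \<inter> B = {}"
  shows "\<nu> (A \<union> B) = \<nu> A + \<nu> B"
proof -
  define F where "F n = (if n = 0 then A else if n = 1 then B else {})" for n :: nat
  have "range F \<subseteq> sets borel" "disjoint_family F" "(\<Union>n. F n) = A \<union> B"
    using assms(2-4) by (auto simp: F_def disjoint_family_on_def split: if_splits)
  then have "(\<lambda>n. \<nu> (F n)) sums \<nu> (A \<union> B)"
    using fsm_sums[OF assms(1)] by metis
  moreover have "(\<lambda>n. \<nu> (F n)) sums (\<Sum>n\<in>{0,1}. \<nu> (F n))"
    by (rule sums_finite) (auto simp: F_def fsm_empty[OF assms(1)])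
  ultimately show ?thesis
    by (simp add: F_def sums_unique2)
qed

lemma fsm_Diff:
  fixes \<nu> :: "'a::topological_space set \<Rightarrow> real"
  assumes "\<nu> \<in> fsm" "A \<in> sets borel" "B \<in> sets borel"
  shows "\<nu> (A - B) = \<nu> A - \<nu> (A \<inter> B)"
proof -
  have "(A - B) \<inter> (A \<inter> B) = {}"
    by blast
  then show ?thesis
    using fsm_Un[OF assms(1), of "A - B" "A \<inter> B"] assms(2,3) by (simp add: Un_Diff_Int)
qed

lemma fsm_linear:
  assumes "\<nu> \<in> fsm" "\<rho> \<in> fsm"
  shows "(\<lambda>A. a * \<nu> A + b * \<rho> A) \<in> fsm"
  using assms unfolding fsm_def by (auto intro!: sums_add sums_mult)

lemma fsm_cmult:
  assumes "\<nu> \<in> fsm"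
  shows "(\<lambda>A. c * \<nu> A) \<in> fsm"
  using assms unfolding fsm_def by (auto intro!: sums_mult)

lemma fsm_restrict:
  fixes \<nu> :: "'a::topological_space set \<Rightarrow> real"
  assumes "\<nu> \<in> fsm" "Y \<in> sets borel"
  shows "(\<lambda>A. if A \<in> sets borel then \<nu> (A \<inter> Y) else 0) \<in> fsm"
  unfolding fsm_def
proof safe
  fix F :: "nat \<Rightarrow> 'a set"
  assume F: "range F \<subseteq> sets borel" "disjoint_family F"
  then have "(\<lambda>n. \<nu> (F n \<inter> Y)) sums \<nu> (\<Union>n. F n \<inter> Y)"
    using assms by (intro fsm_sums) (auto simp: disjoint_family_on_def)
  then show "(\<lambda>n. if F n \<in> sets borel then \<nu> (F n \<inter> Y) else 0) sums
      (if \<Union> (range F) \<in> sets borel then \<nu> (\<Union> (range F) \<inter> Y) else 0)"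
    using F by (auto simp: Int_UN_distrib2)
qed (use fsm_empty[OF assms(1)] in auto)

lemma as_fsm_fsm:
  assumes "finite_measure m" "sets m = sets (borel::'a::topological_space measure)"
  shows "as_fsm m \<in> fsm"
  unfolding fsm_def as_fsm_def
proof safe
  fix F :: "nat \<Rightarrow> 'a set"
  assume "range F \<subseteq> sets borel" "disjoint_family F"
  then show "(\<lambda>n. if F n \<in> sets borel then measure m (F n) else 0) sums
      (if \<Union> (range F) \<in> sets borel then measure m (\<Union> (range F)) else 0)"
    using finite_measure.finite_measure_UNION[OF assms(1), of F] assms(2) by auto
qed auto

lemma fsm_sum_disjointed:
  fixes \<nu> :: "'a::topological_space set \<Rightarrow> real"
  assumes "\<nu> \<in> fsm" "range A \<subseteq> sets borel"
  shows "(\<Sum>i<n. \<nu> (disjointed A i)) = \<nu> (\<Union>i<n. A i)"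
proof (induction n)
  case 0
  then show ?case using fsm_empty[OF assms(1)] by simp
next
  case (Suc n)
  have split: "(\<Union>i<Suc n. A i) = (\<Union>i<n. A i) \<union> disjointed A n"
    by (auto simp: disjointed_def lessThan_Suc)
  have "disjointed A n \<in> sets borel"
    using sets.range_disjointed_sets[OF assms(2)] by auto
  then have "\<nu> (\<Union>i<Suc n. A i) = \<nu> (\<Union>i<n. A i) + \<nu> (disjointed A n)"
    unfolding split using assms by (intro fsm_Un) (auto simp: disjointed_def)
  then show ?case using Suc by simp
qed

lemma fsm_tendsto_incseq:
  fixes \<nu> :: "'a::topological_space set \<Rightarrow> real"
  assumes "\<nu> \<in> fsm" "range A \<subseteq> sets borel" "incseq A"
  shows "(\<lambda>n. \<nu> (A n)) \<longlonglongrightarrow> \<nu> (\<Union>n. A n)"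
proof -
  have "(\<lambda>i. \<nu> (disjointed A i)) sums \<nu> (\<Union>n. A n)"
    using fsm_sums[OF assms(1) sets.range_disjointed_sets[OF assms(2)] disjoint_family_disjointed]
    by (simp add: UN_disjointed_eq)
  then have "(\<lambda>n. \<Sum>i<Suc n. \<nu> (disjointed A i)) \<longlonglongrightarrow> \<nu> (\<Union>n. A n)"
    unfolding sums_def by (rule LIMSEQ_Suc)
  moreover have "(\<Union>i<Suc n. A i) = A n" for n
    using assms(3) by (auto simp: incseq_def lessThan_Suc_atMost)
  ultimately show ?thesis
    using fsm_sum_disjointed[OF assms(1,2)] by simp
qed

lemma fsm_tendsto_decseq:
  fixes \<nu> :: "'a::topological_space set \<Rightarrow> real"
  assumes "\<nu> \<in> fsm" "range A \<subseteq> sets borel" "decseq A"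
  shows "(\<lambda>n. \<nu> (A n)) \<longlonglongrightarrow> \<nu> (\<Inter>n. A n)"
proof -
  have compl: "\<nu> (- X) = \<nu> UNIV - \<nu> X" if "X \<in> sets borel" for X
    using fsm_Diff[OF assms(1) sets.top that] by (simp add: Compl_eq_Diff_UNIV)
  have "(\<lambda>n. \<nu> (- A n)) \<longlonglongrightarrow> \<nu> (\<Union>n. - A n)"
    using assms by (intro fsm_tendsto_incseq) (auto simp: incseq_def decseq_def)
  then have "(\<lambda>n. \<nu> UNIV - \<nu> (- A n)) \<longlonglongrightarrow> \<nu> UNIV - \<nu> (\<Union>n. - A n)"
    by (rule tendsto_diff[OF tendsto_const])
  moreover have "\<nu> UNIV - \<nu> (- A n) = \<nu> (A n)" for n
    using compl[of "A n"] assms(2) by auto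
  moreover have "\<nu> (\<Inter>n. A n) = \<nu> UNIV - \<nu> (\<Union>n. - A n)"
  proof -
    have "(\<Union>n. - A n) \<in> sets borel"
      using assms(2) by auto
    from compl[OF this] show ?thesis
      by simp
  qed
  ultimately show ?thesis
    by simp
qed

section \<open>Hahn and Jordan decompositions\<close>

lemma fsm_bdd_above_split:
  fixes \<nu> :: "'a::topological_space set \<Rightarrow> real"
  assumes "\<nu> \<in> fsm" "B \<in> sets borel"
    and "bdd_above (\<nu> ` {C \<in> sets borel. C \<subseteq> B})" "bdd_above (\<nu> ` {C \<in> sets borel. C \<subseteq> A - B})"
  shows "bdd_above (\<nu> ` {C \<in> sets borel. C \<subseteq> A})"
proof -
  obtain M1 where M1: "\<And>C. C \<in> sets borel \<Longrightarrow> C \<subseteq> B \<Longrightarrow> \<nu> C \<le> M1"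
    using assms(3) unfolding bdd_above_def by auto
  obtain M2 where M2: "\<And>C. C \<in> sets borel \<Longrightarrow> C \<subseteq> A - B \<Longrightarrow> \<nu> C \<le> M2"
    using assms(4) unfolding bdd_above_def by auto
  have "\<nu> C \<le> M1 + M2" if "C \<in> sets borel" "C \<subseteq> A" for C
  proof -
    have "C \<inter> B \<in> sets borel" "C - B \<in> sets borel"
      using that(1) assms(2) by auto
    then have "\<nu> (C \<inter> B) \<le> M1" "\<nu> (C - B) \<le> M2"
      using M1 M2 that(2) by blast+
    then show ?thesis
      using fsm_Diff[OF assms(1) that(1) assms(2)] by linarith
  qed
  then show ?thesis
    unfolding bdd_above_def by auto
qed

lemma fsm_unbounded_split:
  fixes \<nu> :: "'a::topological_space set \<Rightarrow> real"
  assumes "\<nu> \<in> fsm" "A \<in> sets borel" "\<not> bdd_above (\<nu> ` {C \<in> sets borel. C \<subseteq> A})"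
  shows "\<exists>B\<in>sets borel. B \<subseteq> A \<and> 1 \<le> \<bar>\<nu> B\<bar> \<and>
    \<not> bdd_above (\<nu> ` {C \<in> sets borel. C \<subseteq> A - B})"
proof -
  obtain B where B: "B \<in> sets borel" "B \<subseteq> A" "\<bar>\<nu> A\<bar> + 1 < \<nu> B"
    using assms(3) unfolding bdd_above_def by (auto simp: not_le)
  show ?thesis
  proof (cases "bdd_above (\<nu> ` {C \<in> sets borel. C \<subseteq> A - B})")
    case False
    have "1 \<le> \<bar>\<nu> B\<bar>"
      using B(3) by linarith
    show ?thesis
      using conjI[OF B(2) conjI[OF \<open>1 \<le> \<bar>\<nu> B\<bar>\<close> False]] B(1) by (rule bexI)
  next
    case True
    have "A - B \<in> sets borel"
      using assms(2) B(1) by auto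
    have unbounded: "\<not> bdd_above (\<nu> ` {C \<in> sets borel. C \<subseteq> A - (A - B)})"
      using fsm_bdd_above_split[OF assms(1) \<open>A - B \<in> sets borel\<close> True, where A = A] assms(3) by blast
    have "\<nu> (A - B) = \<nu> A - \<nu> B"
      using fsm_Diff[OF assms(1,2) B(1)] B(2) by (simp add: Int_absorb1)
    then have "1 \<le> \<bar>\<nu> (A - B)\<bar>"
      using B(3) by linarith
    show ?thesis
      using conjI[OF Diff_subset conjI[OF \<open>1 \<le> \<bar>\<nu> (A - B)\<bar>\<close> unbounded]] \<open>A - B \<in> sets borel\<close>
      by (rule bexI)
  qed
qed

text \<open>If \<open>\<nu>\<close> were unbounded above, one could peel off infinitely many disjoint sets whose
  measures have absolute value at least 1, contradicting convergence of the series of their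
  measures.\<close>
lemma fsm_bdd_above:
  fixes \<nu> :: "'a::topological_space set \<Rightarrow> real"
  assumes "\<nu> \<in> fsm"
  shows "bdd_above (\<nu> ` sets borel)"
proof (rule ccontr)
  define U where "U A \<longleftrightarrow> \<not> bdd_above (\<nu> ` {C \<in> sets borel. C \<subseteq> A})" for A
  assume "\<not> bdd_above (\<nu> ` sets borel)"
  then have "U UNIV"
    by (simp add: U_def)
  define f where "f A = (SOME B. B \<in> sets borel \<and> B \<subseteq> A \<and> 1 \<le> \<bar>\<nu> B\<bar> \<and> U (A - B))" for A
  have f: "f A \<in> sets borel \<and> f A \<subseteq> A \<and> 1 \<le> \<bar>\<nu> (f A)\<bar> \<and> U (A - f A)"
    if "A \<in> sets borel" "U A" for A
  proof -
    have "\<exists>B. B \<in> sets borel \<and> B \<subseteq> A \<and> 1 \<le> \<bar>\<nu> B\<bar> \<and> U (A - B)"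
      using fsm_unbounded_split[OF assms that(1) that(2)[unfolded U_def]] unfolding U_def Bex_def .
    then show ?thesis
      unfolding f_def by (rule someI_ex)
  qed
  define X where "X = rec_nat UNIV (\<lambda>_ Y. Y - f Y)"
  have X_Suc: "X (Suc n) = X n - f (X n)" for n
    by (simp add: X_def)
  have X: "X n \<in> sets borel \<and> U (X n)" for n
    by (induction n) (use \<open>U UNIV\<close> f in \<open>auto simp: X_def\<close>)
  have B: "f (X n) \<in> sets borel" "f (X n) \<subseteq> X n" "1 \<le> \<bar>\<nu> (f (X n))\<bar>" for n
    using f X by blast+
  have "decseq X"
    by (rule decseq_SucI) (auto simp: X_Suc)
  then have "X j \<subseteq> X (Suc i)" if "i < j" for i j
    using decseqD[of X "Suc i" j] that by simp
  then have "f (X i) \<inter> f (X j) = {}" if "i < j" for i j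
    using B(2)[of j] that by (auto simp: X_Suc)
  then have "disjoint_family (\<lambda>n. f (X n))"
    unfolding disjoint_family_on_def by (metis Int_commute nat_neq_iff)
  then have "(\<lambda>n. \<nu> (f (X n))) sums \<nu> (\<Union>n. f (X n))"
    using B(1) by (intro fsm_sums[OF assms]) auto
  then have "(\<lambda>n. \<nu> (f (X n))) \<longlonglongrightarrow> 0"
    by (intro summable_LIMSEQ_zero) (auto simp: sums_iff)
  then obtain n where "\<bar>\<nu> (f (X n))\<bar> < 1"
    unfolding LIMSEQ_iff by (metis order.refl real_norm_def zero_less_one diff_zero)
  with B(3)[of n] show False
    by linarith
qed

lemma fsm_INT_interval_ge:
  fixes \<nu> :: "'a::topological_space set \<Rightarrow> real"
  assumes "\<nu> \<in> fsm" and E: "\<And>n. E n \<in> sets borel" "\<And>n. \<gamma> - 1 / 2^n < \<nu> (E n)"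
    and le: "\<And>X. X \<in> sets borel \<Longrightarrow> \<nu> X \<le> \<gamma>" and "m \<le> n"
  shows "\<gamma> - 2 / 2^m + 1 / 2^n \<le> \<nu> (\<Inter>i\<in>{m..n}. E i)"
  using \<open>m \<le> n\<close>
proof (induction rule: dec_induct)
  case base
  then show ?case using E(2)[of m] by (simp add: field_simps)
next
  case (step i)
  define F where "F = (\<Inter>i\<in>{m..i}. E i)"
  have F: "F \<in> sets borel"
    unfolding F_def using E(1) by (intro sets.countable_INT'') auto
  have F_Suc: "(\<Inter>i\<in>{m..Suc i}. E i) = F \<inter> E (Suc i)"
    using \<open>m \<le> i\<close> by (auto simp: F_def le_Suc_eq)
  have "\<gamma> + (\<gamma> - 2 / 2^m + 1 / 2 ^ Suc i) \<le> (\<gamma> - 1 / 2^Suc i) + (\<gamma> - 2 / 2^m + 1 / 2^i)"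
    by (simp add: field_simps)
  also have "\<dots> \<le> \<nu> (E (Suc i)) + \<nu> F"
    using E(2)[of "Suc i"] step.IH unfolding F_def by linarith
  also have "\<dots> = \<nu> (E (Suc i) \<union> F) + \<nu> (F \<inter> E (Suc i))"
    using fsm_Un[OF assms(1), of "E (Suc i)" "F - E (Suc i)"] fsm_Diff[OF assms(1) F E(1)[of "Suc i"]] F E(1)
    by (simp add: Un_Diff_cancel)
  also have "\<dots> \<le> \<gamma> + \<nu> (F \<inter> E (Suc i))"
    using le F E(1) by auto
  finally show ?case
    by (simp add: F_Suc)
qed

text \<open>The classical argument for the Hahn decomposition: take sets \<open>E n\<close> whose measures
  approach the supremum fast enough that their lower limit still attains it.\<close>
lemma fsm_attains_Sup:
  fixes \<nu> :: "'a::topological_space set \<Rightarrow> real"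
  assumes "\<nu> \<in> fsm"
  shows "\<exists>Y\<in>sets borel. \<forall>X\<in>sets borel. \<nu> X \<le> \<nu> Y"
proof -
  define \<gamma> where "\<gamma> = (SUP X\<in>sets borel. \<nu> X)"
  have le: "\<nu> X \<le> \<gamma>" if "X \<in> sets borel" for X
    unfolding \<gamma>_def using fsm_bdd_above[OF assms] that by (rule cSUP_upper2) simp
  have "\<exists>X\<in>sets borel. \<gamma> - 1 / 2^n < \<nu> X" for n
    unfolding \<gamma>_def using fsm_bdd_above[OF assms] by (intro less_cSUP_iff[THEN iffD1]) auto
  then obtain E where E: "\<And>n. E n \<in> sets borel" "\<And>n. \<gamma> - 1 / 2^n < \<nu> (E n)"
    by metis
  define F where "F m = (\<Inter>i\<in>{m..}. E i)" for m
  have F: "F m \<in> sets borel" for m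
    using E(1) by (auto simp: F_def)
  have "\<gamma> - 2 / 2^m \<le> \<nu> (F m)" for m
  proof (rule LIMSEQ_le_const)
    have "decseq (\<lambda>n. \<Inter>i\<in>{m..m + n}. E i)" and "(\<Inter>n. \<Inter>i\<in>{m..m + n}. E i) = F m"
      by (fastforce simp: decseq_def F_def le_iff_add)+
    moreover have "range (\<lambda>n. \<Inter>i\<in>{m..m + n}. E i) \<subseteq> sets borel"
      using E(1) by (auto intro!: sets.countable_INT'')
    ultimately show "(\<lambda>n. \<nu> (\<Inter>i\<in>{m..m + n}. E i)) \<longlonglongrightarrow> \<nu> (F m)"
      by (metis fsm_tendsto_decseq[OF assms])
    show "\<exists>N. \<forall>n\<ge>N. \<gamma> - 2 / 2^m \<le> \<nu> (\<Inter>i\<in>{m..m + n}. E i)"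
    proof (intro exI allI impI)
      fix n :: nat
      have "\<gamma> - 2 / 2^m + 1 / 2^(m + n) \<le> \<nu> (\<Inter>i\<in>{m..m + n}. E i)"
        by (rule fsm_INT_interval_ge[OF assms E le le_add1])
      moreover have "0 \<le> 1 / (2::real)^(m + n)"
        by simp
      ultimately show "\<gamma> - 2 / 2^m \<le> \<nu> (\<Inter>i\<in>{m..m + n}. E i)"
        by linarith
    qed
  qed
  moreover have "(\<lambda>m. \<nu> (F m)) \<longlonglongrightarrow> \<nu> (\<Union>m. F m)"
    using F by (intro fsm_tendsto_incseq[OF assms]) (auto simp: incseq_def F_def)
  moreover have "(\<lambda>m. \<gamma> - 2 / 2^m) \<longlonglongrightarrow> \<gamma> - 0"
    by (intro tendsto_intros LIMSEQ_divide_realpow_zero) auto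
  ultimately have "\<gamma> \<le> \<nu> (\<Union>m. F m)"
    by (intro LIMSEQ_le[where X="\<lambda>m. \<gamma> - 2 / 2^m"]) auto
  then show ?thesis
    using F le by (intro bexI[of _ "\<Union>m. F m"]) force+
qed

lemma fsm_Hahn_decomposition:
  fixes \<nu> :: "'a::topological_space set \<Rightarrow> real"
  assumes "\<nu> \<in> fsm"
  obtains Y where "Y \<in> sets borel"
    "\<And>X. X \<in> sets borel \<Longrightarrow> X \<subseteq> Y \<Longrightarrow> 0 \<le> \<nu> X"
    "\<And>X. X \<in> sets borel \<Longrightarrow> X \<inter> Y = {} \<Longrightarrow> \<nu> X \<le> 0"
proof -
  obtain Y where Y: "Y \<in> sets borel" and max: "\<And>X. X \<in> sets borel \<Longrightarrow> \<nu> X \<le> \<nu> Y"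
    using fsm_attains_Sup[OF assms] by blast
  show thesis
  proof (rule that[OF Y])
    fix X assume X: "X \<in> sets borel" "X \<subseteq> Y"
    then show "0 \<le> \<nu> X"
      using fsm_Diff[OF assms Y X(1)] max[of "Y - X"] Y by (simp add: Int_absorb1)
  next
    fix X assume X: "X \<in> sets borel" "X \<inter> Y = {}"
    then show "\<nu> X \<le> 0"
      using fsm_Un[OF assms Y X(1)] max[of "Y \<union> X"] Y by (simp add: Int_commute)
  qed
qed

lemma fsm_nonneg_measure:
  fixes \<sigma> :: "'a::topological_space set \<Rightarrow> real"
  assumes "\<sigma> \<in> fsm" and nonneg: "\<And>X. X \<in> sets borel \<Longrightarrow> 0 \<le> \<sigma> X"
  obtains m where "finite_measure m" "sets m = sets borel"
    "\<And>A. A \<in> sets borel \<Longrightarrow> measure m A = \<sigma> A"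
proof
  define m where "m = measure_of UNIV (sets borel) (\<lambda>A. ennreal (\<sigma> A))"
  have "countably_additive (sets borel) (\<lambda>A. ennreal (\<sigma> A))"
    unfolding countably_additive_def
  proof safe
    fix A :: "nat \<Rightarrow> 'a set"
    assume A: "range A \<subseteq> sets borel" "disjoint_family A"
    then have sums: "(\<lambda>n. \<sigma> (A n)) sums \<sigma> (\<Union>n. A n)"
      by (rule fsm_sums[OF assms(1)])
    then show "(\<Sum>i. ennreal (\<sigma> (A i))) = ennreal (\<sigma> (\<Union> (range A)))"
      using A(1) nonneg by (subst suminf_ennreal2) (auto simp: sums_iff)
  qed
  then have emeasure: "emeasure m A = ennreal (\<sigma> A)" if "A \<in> sets borel" for A
    unfolding m_def using that fsm_empty[OF assms(1)]
    by (intro emeasure_measure_of_sigma) (auto simp: positive_def sets.sigma_algebra_axioms[of borel, simplified])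
  show sets: "sets m = sets borel"
    unfolding m_def by (metis sets_measure_of sets.space_closed sets.sigma_sets_eq space_borel)
  show "finite_measure m"
    using sets_eq_imp_space_eq[OF sets] by (intro finite_measureI) (simp add: emeasure)
  show "measure m A = \<sigma> A" if "A \<in> sets borel" for A
    using emeasure[OF that] nonneg[OF that] by (simp add: measure_def)
qed

lemma fsm_Jordan_decomposition:
  fixes \<nu> :: "'a::topological_space set \<Rightarrow> real"
  assumes "\<nu> \<in> fsm"
  shows "\<exists>m1 m2. finite_measure m1 \<and> sets m1 = sets (borel::'a measure) \<and>
    finite_measure m2 \<and> sets m2 = sets (borel::'a measure) \<and>
    (\<forall>A\<in>sets (borel::'a measure). \<nu> A = measure m1 A - measure m2 A)"
proof -
  obtain Y where Y: "Y \<in> sets borel" "\<And>X. X \<in> sets borel \<Longrightarrow> X \<subseteq> Y \<Longrightarrow> 0 \<le> \<nu> X"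
    "\<And>X. X \<in> sets borel \<Longrightarrow> X \<inter> Y = {} \<Longrightarrow> \<nu> X \<le> 0"
    using fsm_Hahn_decomposition[OF assms] by blast
  obtain m1 where m1: "finite_measure m1" "sets m1 = sets borel"
      "\<And>A. A \<in> sets borel \<Longrightarrow> measure m1 A = \<nu> (A \<inter> Y)"
  proof (rule fsm_nonneg_measure[OF fsm_restrict[OF assms Y(1)]])
    show "0 \<le> (if X \<in> sets borel then \<nu> (X \<inter> Y) else 0)" if "X \<in> sets borel" for X
      using Y that by auto
  qed (auto intro: that)
  obtain m2 where m2: "finite_measure m2" "sets m2 = sets borel"
      "\<And>A. A \<in> sets borel \<Longrightarrow> measure m2 A = - \<nu> (A \<inter> - Y)"
  proof (rule fsm_nonneg_measure[OF fsm_cmult[OF fsm_restrict[OF assms, of "- Y"], of "- 1"]])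
    show "0 \<le> - 1 * (if X \<in> sets borel then \<nu> (X \<inter> - Y) else 0)" if "X \<in> sets borel" for X
      using Y that by auto
  qed (use Y(1) in \<open>auto intro: that\<close>)
  have "\<nu> A = measure m1 A - measure m2 A" if "A \<in> sets borel" for A
    using fsm_Diff[OF assms that Y(1)] m1(3)[OF that] m2(3)[OF that] by (simp add: Diff_eq)
  then show ?thesis
    using m1(1,2) m2(1,2) by blast
qed

section \<open>Integration against finite signed measures\<close>

lemma nn_integral_measure_sum_eq:
  fixes f :: "'a \<Rightarrow> ennreal"
  assumes sets: "sets m1 = sets M" "sets m2 = sets M" "sets n1 = sets M" "sets n2 = sets M"
    and eq: "\<And>A. A \<in> sets M \<Longrightarrow> emeasure m1 A + emeasure m2 A = emeasure n1 A + emeasure n2 A"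
    and f: "f \<in> borel_measurable M"
  shows "(\<integral>\<^sup>+x. f x \<partial>m1) + (\<integral>\<^sup>+x. f x \<partial>m2) =
    (\<integral>\<^sup>+x. f x \<partial>n1) + (\<integral>\<^sup>+x. f x \<partial>n2)"
proof -
  have meas: "borel_measurable k = borel_measurable M" if "sets k = sets M" for k
    using that by (intro measurable_cong_sets) auto
  have space: "space k = space M" if "sets k = sets M" for k
    using that by (rule sets_eq_imp_space_eq)
  show ?thesis
    using f
  proof (induction rule: borel_measurable_induct)
    case (cong f g)
    then have "(\<integral>\<^sup>+x. f x \<partial>k) = (\<integral>\<^sup>+x. g x \<partial>k)" if "sets k = sets M" for k
      using space[OF that] by (intro nn_integral_cong) auto
    with cong.IH sets show ?case
      by simp
  next
    case (set A)
    then show ?case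
      using eq sets by simp
  next
    case (mult u c)
    have "(\<integral>\<^sup>+x. c * u x \<partial>k) = c * (\<integral>\<^sup>+x. u x \<partial>k)" if "sets k = sets M" for k
      using mult.hyps meas[OF that] by (intro nn_integral_cmult) auto
    with mult.IH sets show ?case
      by (simp add: distrib_left[symmetric])
  next
    case (add u v)
    have split: "(\<integral>\<^sup>+x. v x + u x \<partial>k) = (\<integral>\<^sup>+x. v x \<partial>k) + (\<integral>\<^sup>+x. u x \<partial>k)"
      if "sets k = sets M" for k
      using add.hyps(1,3) meas[OF that] by (intro nn_integral_add) auto
    show ?case
      unfolding split[OF sets(1)] split[OF sets(2)] split[OF sets(3)] split[OF sets(4)]
      using add.IH by (simp add: add_ac)
  next
    case (seq U)
    have "(\<integral>\<^sup>+x. (SUP i. U i) x \<partial>k) + (\<integral>\<^sup>+x. (SUP i. U i) x \<partial>k') =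
        (SUP i. (\<integral>\<^sup>+x. U i x \<partial>k) + (\<integral>\<^sup>+x. U i x \<partial>k'))"
      if "sets k = sets M" "sets k' = sets M" for k k'
    proof -
      have "incseq (\<lambda>i. \<integral>\<^sup>+x. U i x \<partial>k)" "incseq (\<lambda>i. \<integral>\<^sup>+x. U i x \<partial>k')"
        using seq.hyps(3) by (auto simp: incseq_def le_fun_def intro!: nn_integral_mono)
      moreover have "(\<integral>\<^sup>+x. (SUP i. U i) x \<partial>j) = (SUP i. \<integral>\<^sup>+x. U i x \<partial>j)"
        if "sets j = sets M" for j
        using seq.hyps(1,3) meas[OF that] unfolding SUP_apply
        by (intro nn_integral_monotone_convergence_SUP) auto
      ultimately show ?thesis
        using that by (simp add: ennreal_SUP_add)
    qed
    with seq.IH sets show ?case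
      by simp
  qed
qed

lemma integral_measure_sum_eq:
  fixes g :: "'a \<Rightarrow> real"
  assumes fin: "finite_measure m1" "finite_measure m2" "finite_measure n1" "finite_measure n2"
    and sets: "sets m1 = sets M" "sets m2 = sets M" "sets n1 = sets M" "sets n2 = sets M"
    and eq: "\<And>A. A \<in> sets M \<Longrightarrow> measure m1 A + measure m2 A = measure n1 A + measure n2 A"
    and g: "g \<in> borel_measurable M" "\<And>x. \<bar>g x\<bar> \<le> B"
  shows "integral\<^sup>L m1 g + integral\<^sup>L m2 g = integral\<^sup>L n1 g + integral\<^sup>L n2 g"
proof -
  have integrable: "integrable k h" if "finite_measure k" "sets k = sets M"
    and "h \<in> borel_measurable M" "\<And>x. \<bar>h x\<bar> \<le> B" for k h
  proof -
    have "borel_measurable k = borel_measurable M"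
      using that(2) by (intro measurable_cong_sets) auto
    with that show ?thesis
      by (intro finite_measure.integrable_const_bound[where B=B]) auto
  qed
  have emeasure_sum: "emeasure k A + emeasure k' A = ennreal (measure k A + measure k' A)"
    if "finite_measure k" "finite_measure k'" for k k' A
    using that by (simp add: finite_measure.emeasure_eq_measure ennreal_plus)
  have emeq: "emeasure m1 A + emeasure m2 A = emeasure n1 A + emeasure n2 A" if "A \<in> sets M" for A
    unfolding emeasure_sum[OF fin(1,2)] emeasure_sum[OF fin(3,4)] eq[OF that] ..
  have nonneg: "integral\<^sup>L m1 h + integral\<^sup>L m2 h = integral\<^sup>L n1 h + integral\<^sup>L n2 h"
    if h: "h \<in> borel_measurable M" "\<And>x. 0 \<le> h x" "\<And>x. \<bar>h x\<bar> \<le> B" for h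
  proof -
    have nn: "(\<integral>\<^sup>+x. ennreal (h x) \<partial>k) = ennreal (integral\<^sup>L k h)"
      if "finite_measure k" "sets k = sets M" for k
      using integrable[OF that h(1,3)] h(2) by (intro nn_integral_eq_integral) auto
    have int_nonneg: "0 \<le> integral\<^sup>L k h" for k
      using h(2) by (intro integral_nonneg_AE) auto
    have "(\<integral>\<^sup>+x. ennreal (h x) \<partial>m1) + (\<integral>\<^sup>+x. ennreal (h x) \<partial>m2) =
        (\<integral>\<^sup>+x. ennreal (h x) \<partial>n1) + (\<integral>\<^sup>+x. ennreal (h x) \<partial>n2)"
      by (rule nn_integral_measure_sum_eq[OF sets emeq measurable_compose[OF h(1) measurable_ennreal]])
    then have "ennreal (integral\<^sup>L m1 h + integral\<^sup>L m2 h) = ennreal (integral\<^sup>L n1 h + integral\<^sup>L n2 h)"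
      using int_nonneg by (simp add: nn[OF fin(1) sets(1)] nn[OF fin(2) sets(2)] nn[OF fin(3) sets(3)]
        nn[OF fin(4) sets(4)] ennreal_plus)
    then show ?thesis
      using int_nonneg by (metis add_nonneg_nonneg ennreal_inj)
  qed
  have bounds: "\<bar>max (g x) 0\<bar> \<le> B" "\<bar>max (- g x) 0\<bar> \<le> B" for x
    using g(2)[of x] by auto
  have measurable: "(\<lambda>x. max (g x) 0) \<in> borel_measurable M" "(\<lambda>x. max (- g x) 0) \<in> borel_measurable M"
    using g(1) by auto
  have parts: "integral\<^sup>L k g = integral\<^sup>L k (\<lambda>x. max (g x) 0) - integral\<^sup>L k (\<lambda>x. max (- g x) 0)"
    if "finite_measure k" "sets k = sets M" for k
  proof -
    have "integral\<^sup>L k g = integral\<^sup>L k (\<lambda>x. max (g x) 0 - max (- g x) 0)"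
      by (rule arg_cong[where f = "integral\<^sup>L k"]) (auto simp: fun_eq_iff max_def)
    also have "\<dots> = integral\<^sup>L k (\<lambda>x. max (g x) 0) - integral\<^sup>L k (\<lambda>x. max (- g x) 0)"
      using integrable[OF that measurable(1) bounds(1)] integrable[OF that measurable(2) bounds(2)]
      by (rule Bochner_Integration.integral_diff)
    finally show ?thesis .
  qed
  show ?thesis
    using nonneg[OF measurable(1) _ bounds(1)] nonneg[OF measurable(2) _ bounds(2)]
      parts[OF fin(1) sets(1)] parts[OF fin(2) sets(2)] parts[OF fin(3) sets(3)] parts[OF fin(4) sets(4)]
    by simp
qed

lemma sint_decomposition:
  fixes \<nu> :: "'a::topological_space set \<Rightarrow> real"
  assumes "\<nu> \<in> fsm"
  shows "\<exists>m1 m2. finite_measure m1 \<and> sets m1 = sets (borel::'a measure) \<and>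
    finite_measure m2 \<and> sets m2 = sets (borel::'a measure) \<and>
    (\<forall>A\<in>sets (borel::'a measure). \<nu> A = measure m1 A - measure m2 A) \<and>
    (\<forall>f. sint \<nu> f = integral\<^sup>L m1 f - integral\<^sup>L m2 f)"
proof -
  define P where "P = (\<lambda>(m1, m2). finite_measure m1 \<and> sets m1 = sets (borel::'a measure)
    \<and> finite_measure m2 \<and> sets m2 = sets (borel::'a measure)
    \<and> (\<forall>A\<in>sets (borel::'a measure). \<nu> A = measure m1 A - measure m2 A))"
  obtain m1 m2 where m: "(m1, m2) = Eps P"
    by (metis surj_pair)
  obtain n1 n2 where "finite_measure n1 \<and> sets n1 = sets (borel::'a measure)
    \<and> finite_measure n2 \<and> sets n2 = sets (borel::'a measure)
    \<and> (\<forall>A\<in>sets (borel::'a measure). \<nu> A = measure n1 A - measure n2 A)"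
    using fsm_Jordan_decomposition[OF assms] by (elim exE) (rule that)
  then have "P (n1, n2)"
    unfolding P_def by simp
  then have "P (m1, m2)"
    unfolding m by (rule someI)
  moreover have "sint \<nu> f = integral\<^sup>L m1 f - integral\<^sup>L m2 f" for f
    unfolding sint_def P_def[symmetric] m[symmetric] by simp
  ultimately show ?thesis
    unfolding P_def by blast
qed

lemma sint_eq_integral_diff:
  fixes \<nu> :: "'a::topological_space set \<Rightarrow> real"
  assumes "\<nu> \<in> fsm"
    and n: "finite_measure n1" "sets n1 = sets borel" "finite_measure n2" "sets n2 = sets borel"
    and \<nu>: "\<And>A. A \<in> sets borel \<Longrightarrow> \<nu> A = measure n1 A - measure n2 A"
    and g: "g \<in> borel_measurable borel" "\<And>x. \<bar>g x\<bar> \<le> B"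
  shows "sint \<nu> g = integral\<^sup>L n1 g - integral\<^sup>L n2 g"
proof -
  obtain m1 m2 where m: "finite_measure m1" "sets m1 = sets (borel::'a measure)" "finite_measure m2"
    "sets m2 = sets (borel::'a measure)" "\<forall>A\<in>sets (borel::'a measure). \<nu> A = measure m1 A - measure m2 A"
    "\<forall>f. sint \<nu> f = integral\<^sup>L m1 f - integral\<^sup>L m2 f"
    using sint_decomposition[OF assms(1)] by (elim exE conjE) (rule that)
  have "measure m1 A + measure n2 A = measure n1 A + measure m2 A" if "A \<in> sets borel" for A
  proof -
    have "\<nu> A = measure m1 A - measure m2 A"
      using m(5) that by blast
    with \<nu>[OF that] show ?thesis
      by linarith
  qed
  then have "integral\<^sup>L m1 g + integral\<^sup>L n2 g = integral\<^sup>L n1 g + integral\<^sup>L m2 g"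
    by (rule integral_measure_sum_eq[OF m(1) n(3) n(1) m(3) m(2) n(4) n(2) m(4) _ g])
  moreover have "sint \<nu> g = integral\<^sup>L m1 g - integral\<^sup>L m2 g"
    using m(6) by blast
  ultimately show ?thesis
    by linarith
qed

lemma sint_indicator:
  fixes \<nu> :: "'a::topological_space set \<Rightarrow> real"
  assumes "\<nu> \<in> fsm" "A \<in> sets borel"
  shows "sint \<nu> (indicator A) = \<nu> A"
proof -
  obtain m1 m2 where "finite_measure m1" "sets m1 = sets (borel::'a measure)" "finite_measure m2"
    "sets m2 = sets (borel::'a measure)" "\<forall>A\<in>sets (borel::'a measure). \<nu> A = measure m1 A - measure m2 A"
    "\<forall>f. sint \<nu> f = integral\<^sup>L m1 f - integral\<^sup>L m2 f"
    using sint_decomposition[OF assms(1)] by (elim exE conjE) (rule that)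
  with assms(2) show ?thesis
    by (simp add: sets_eq_imp_space_eq)
qed

lemma sint_mult_const:
  fixes \<nu> :: "'a::topological_space set \<Rightarrow> real"
  assumes "\<nu> \<in> fsm"
  shows "sint \<nu> (\<lambda>x. f x * c) = sint \<nu> f * c"
  using sint_decomposition[OF assms] by (auto simp: left_diff_distrib)

definition dirac :: "'a::topological_space \<Rightarrow> 'a set \<Rightarrow> real" where
  "dirac y = as_fsm (return borel y)"

lemma finite_measure_return: "finite_measure (return borel y)"
  by (rule prob_space.axioms(1)[OF prob_space_return]) simp

lemma dirac_fsm: "dirac y \<in> fsm"
  unfolding dirac_def by (rule as_fsm_fsm[OF finite_measure_return]) simp

lemma dirac_nonneg: "0 \<le> dirac y A"
  by (simp add: dirac_def as_fsm_def)

lemma dirac_borel: "A \<in> sets borel \<Longrightarrow> dirac y A = indicator A y"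
  by (simp add: dirac_def as_fsm_def measure_return)

lemma sint_dirac:
  assumes "g \<in> borel_measurable borel" "\<And>x. \<bar>g x\<bar> \<le> B"
  shows "sint (dirac y) g = g y"
proof -
  have null: "finite_measure (null_measure borel)"
    by (rule finite_measureI) simp
  have "sint (dirac y) g = integral\<^sup>L (return borel y) g - integral\<^sup>L (null_measure borel) g"
    by (rule sint_eq_integral_diff[OF dirac_fsm finite_measure_return _ null _ _ assms])
      (simp_all add: dirac_borel measure_return)
  with assms(1) show ?thesis
    by (simp add: integral_return)
qed

section \<open>Total variation and rank-one operators\<close>

lemma tvnorm_bdd_above:
  fixes \<nu> :: "'a::topological_space set \<Rightarrow> real"
  assumes "\<nu> \<in> fsm"
  shows "bdd_above {(\<Sum>A\<in>P. \<bar>\<nu> A\<bar>) | P. finite P \<and> P \<subseteq> sets (borel::'a measure) \<and> disjoint P}"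
proof -
  obtain m1 m2 where m: "finite_measure m1" "sets m1 = sets (borel::'a measure)" "finite_measure m2"
     "sets m2 = sets (borel::'a measure)" "\<forall>A\<in>sets (borel::'a measure). \<nu> A = measure m1 A - measure m2 A"
    using fsm_Jordan_decomposition[OF assms] by blast
  interpret m1: finite_measure m1 by fact
  interpret m2: finite_measure m2 by fact
  have "(\<Sum>A\<in>P. \<bar>\<nu> A\<bar>) \<le> measure m1 UNIV + measure m2 UNIV"
    if P: "finite P" "P \<subseteq> sets borel" "disjoint P" for P
  proof -
    have "(\<Sum>A\<in>P. \<bar>\<nu> A\<bar>) \<le> (\<Sum>A\<in>P. measure m1 A + measure m2 A)"
      using m(5) P(2) by (intro sum_mono) (auto simp: abs_le_iff)
    also have "\<dots> = measure m1 (\<Union>P) + measure m2 (\<Union>P)"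
      using P m(2,4) by (simp add: sum.distrib measure_Union' m1.fmeasurable_eq_sets
        m2.fmeasurable_eq_sets subset_eq)
    also have "\<dots> \<le> measure m1 UNIV + measure m2 UNIV"
      using m1.bounded_measure m2.bounded_measure sets_eq_imp_space_eq[OF m(2)]
        sets_eq_imp_space_eq[OF m(4)] by (intro add_mono) auto
    finally show ?thesis .
  qed
  then show ?thesis
    unfolding bdd_above_def by blast
qed

lemma sum_abs_le_tvnorm:
  fixes \<nu> :: "'a::topological_space set \<Rightarrow> real"
  assumes "\<nu> \<in> fsm" "finite P" "P \<subseteq> sets (borel::'a measure)" "disjoint P"
  shows "(\<Sum>A\<in>P. \<bar>\<nu> A\<bar>) \<le> tvnorm \<nu>"
  unfolding tvnorm_def by (rule cSup_upper[OF _ tvnorm_bdd_above[OF assms(1)]]) (use assms in blast)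

lemma abs_le_tvnorm:
  fixes \<nu> :: "'a::topological_space set \<Rightarrow> real"
  assumes "\<nu> \<in> fsm" "A \<in> sets (borel::'a measure)"
  shows "\<bar>\<nu> A\<bar> \<le> tvnorm \<nu>"
  using sum_abs_le_tvnorm[OF assms(1), of "{A}"] assms(2) by simp

lemma tvnorm_cmult_prob:
  fixes \<mu> :: "'a::topological_space measure"
  assumes "prob_space \<mu>" "sets \<mu> = sets (borel::'a measure)"
  shows "tvnorm (\<lambda>A. c * as_fsm \<mu> A) \<le> \<bar>c\<bar>"
  unfolding tvnorm_def
proof (rule cSup_least)
  interpret prob_space \<mu> by fact
  fix s
  assume "s \<in> {(\<Sum>A\<in>P. \<bar>c * as_fsm \<mu> A\<bar>) | P. finite P \<and> P \<subseteq> sets (borel::'a measure) \<and> disjoint P}"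
  then obtain P where P: "finite P" "P \<subseteq> sets borel" "disjoint P" "s = (\<Sum>A\<in>P. \<bar>c * as_fsm \<mu> A\<bar>)"
    by blast
  have "s = \<bar>c\<bar> * (\<Sum>A\<in>P. measure \<mu> A)"
    unfolding P(4) sum_distrib_left using P(2) by (intro sum.cong) (auto simp: as_fsm_def abs_mult)
  also have "\<dots> = \<bar>c\<bar> * measure \<mu> (\<Union>P)"
  proof -
    have "measure \<mu> (\<Union>P) = (\<Sum>A\<in>P. measure \<mu> A)"
      by (rule measure_Union'[where M=\<mu>, OF P(1) _ P(3)])
        (use P(2) assms(2) in \<open>auto simp: fmeasurable_eq_sets\<close>)
    then show ?thesis
      by simp
  qed
  also have "\<dots> \<le> \<bar>c\<bar>"
    by (simp add: mult_left_le)
  finally show "s \<le> \<bar>c\<bar>" .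
qed (auto intro!: exI[of _ "{}"])

lemma op_leD:
  assumes "op_le S T" "\<nu> \<in> fsm" "\<And>A. 0 \<le> \<nu> A"
  shows "S \<nu> A \<le> T \<nu> A"
  using assms unfolding op_le_def by blast

lemma is_op_sup_upper: "is_op_sup F S \<Longrightarrow> T \<in> F \<Longrightarrow> op_le T S"
  unfolding is_op_sup_def by blast

lemma is_op_sup_least:
  "is_op_sup F S \<Longrightarrow> bounded_op U \<Longrightarrow> (\<And>T. T \<in> F \<Longrightarrow> op_le T U) \<Longrightarrow> op_le S U"
  unfolding is_op_sup_def by blast

lemma bounded_op_rank_one:
  fixes \<mu> :: "'a::topological_space measure" and c :: "('a set \<Rightarrow> real) \<Rightarrow> real"
  assumes \<mu>: "prob_space \<mu>" "sets \<mu> = sets (borel::'a measure)"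
    and linear: "\<And>\<nu> \<rho> a b. \<nu> \<in> fsm \<Longrightarrow> \<rho> \<in> fsm \<Longrightarrow>
      c (\<lambda>A. a * \<nu> A + b * \<rho> A) = a * c \<nu> + b * c \<rho>"
    and bounded: "\<And>\<nu>. \<nu> \<in> fsm \<Longrightarrow> \<bar>c \<nu>\<bar> \<le> tvnorm \<nu>"
  shows "bounded_op (\<lambda>\<nu> A. c \<nu> * as_fsm \<mu> A)"
  unfolding bounded_op_def
proof (intro conjI ballI allI exI[of _ 1])
  fix \<nu> :: "'a set \<Rightarrow> real"
  assume "\<nu> \<in> fsm"
  show "(\<lambda>A. c \<nu> * as_fsm \<mu> A) \<in> fsm"
    using \<mu> by (intro fsm_cmult as_fsm_fsm prob_space.axioms(1))
  show "tvnorm (\<lambda>A. c \<nu> * as_fsm \<mu> A) \<le> 1 * tvnorm \<nu>"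
    using tvnorm_cmult_prob[OF \<mu>, of "c \<nu>"] bounded[OF \<open>\<nu> \<in> fsm\<close>] by simp
next
  fix \<nu> \<rho> :: "'a set \<Rightarrow> real" and a b :: real
  assume "\<nu> \<in> fsm" "\<rho> \<in> fsm"
  then show "(\<lambda>A. c (\<lambda>A. a * \<nu> A + b * \<rho> A) * as_fsm \<mu> A) =
      (\<lambda>A. a * (c \<nu> * as_fsm \<mu> A) + b * (c \<rho> * as_fsm \<mu> A))"
    using linear by (auto simp: algebra_simps)
qed

lemma tensor_indicator:
  assumes "\<nu> \<in> fsm" "A \<in> sets borel"
  shows "tensor (indicator A) \<mu> \<nu> B = \<nu> A * \<mu> B"
  using sint_indicator[OF assms] by (simp add: tensor_def)

lemma bounded_op_tensor_indicator:
  fixes \<mu> :: "'a::topological_space measure"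
  assumes \<mu>: "prob_space \<mu>" "sets \<mu> = sets (borel::'a measure)" and "A \<in> sets borel"
  shows "bounded_op (tensor (indicator A) (as_fsm \<mu>))"
proof -
  have "bounded_op (\<lambda>\<nu> B. sint \<nu> (indicator A) * as_fsm \<mu> B)"
    using assms by (intro bounded_op_rank_one[OF \<mu>])
      (simp_all add: sint_indicator fsm_linear abs_le_tvnorm)
  then show ?thesis
    by (simp add: tensor_def)
qed

lemma weakly_cont_tensor_indicator:
  fixes \<mu> :: "'a::topological_space measure"
  assumes \<mu>: "prob_space \<mu>" "sets \<mu> = sets (borel::'a measure)" and A: "A \<in> sets borel"
  shows "weakly_cont (tensor (indicator A) (as_fsm \<mu>))"
  unfolding weakly_cont_def
proof (intro conjI bounded_op_tensor_indicator[OF assms] exI[of _ "\<lambda>y B. indicator A y * as_fsm \<mu> B"])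
  have "as_fsm \<mu> \<in> fsm"
    using \<mu> by (intro as_fsm_fsm prob_space.axioms(1))
  then show "bounded_kernel (\<lambda>y B. indicator A y * as_fsm \<mu> B)"
    unfolding bounded_kernel_def
  proof (intro conjI allI ballI exI[of _ 1])
    fix y
    show "(\<lambda>B. indicator A y * as_fsm \<mu> B) \<in> fsm"
      by (rule fsm_cmult) fact
    show "tvnorm (\<lambda>B. indicator A y * as_fsm \<mu> B) \<le> 1"
      using tvnorm_cmult_prob[OF \<mu>, of "indicator A y"] by (rule order_trans) simp
  next
    fix B :: "'a set"
    show "(\<lambda>y. indicator A y * as_fsm \<mu> B) \<in> borel_measurable borel"
      using A by simp
  qed
  show "\<forall>\<nu>\<in>fsm. \<forall>B\<in>sets borel.
      tensor (indicator A) (as_fsm \<mu>) \<nu> B = sint \<nu> (\<lambda>y. indicator A y * as_fsm \<mu> B)"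
    by (simp add: tensor_def sint_mult_const)
qed

lemma op_le_tensor_indicator:
  fixes \<mu> :: "'a::topological_space measure"
  assumes "A \<in> sets borel" "B \<in> sets borel" "A \<subseteq> B"
  shows "op_le (tensor (indicator A) (as_fsm \<mu>)) (tensor (indicator B) (as_fsm \<mu>))"
  unfolding op_le_def
proof (intro ballI allI impI)
  fix \<nu> :: "'a set \<Rightarrow> real" and C
  assume \<nu>: "\<nu> \<in> fsm" "\<forall>A. 0 \<le> \<nu> A"
  have "\<nu> (B - A) = \<nu> B - \<nu> A"
    using fsm_Diff[OF \<nu>(1) assms(2,1)] assms(3) by (simp add: Int_absorb1)
  moreover have "0 \<le> \<nu> (B - A)"
    using \<nu>(2) by blast
  ultimately have "\<nu> A \<le> \<nu> B"
    by linarith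
  then show "tensor (indicator A) (as_fsm \<mu>) \<nu> C \<le> tensor (indicator B) (as_fsm \<mu>) \<nu> C"
    using assms by (simp add: tensor_indicator[OF \<nu>(1)] mult_right_mono as_fsm_def)
qed

section \<open>The supremum of the operators \<open>T\<^sub>x\<close>\<close>

lemma singleton_borel: "{x} \<in> sets (borel::'a::t1_space measure)"
  by (rule borel_closed[OF closed_singleton])

lemma atoms_abs_summable:
  fixes \<nu> :: "'a::t1_space set \<Rightarrow> real"
  assumes "\<nu> \<in> fsm"
  shows "(\<lambda>x. norm (\<nu> {x})) summable_on E" "(\<Sum>\<^sub>\<infinity>x\<in>E. norm (\<nu> {x})) \<le> tvnorm \<nu>"
proof -
  have finite_sums: "(\<Sum>x\<in>F. norm (\<nu> {x})) \<le> tvnorm \<nu>" if "finite F" for F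
  proof -
    have "(\<Sum>x\<in>F. norm (\<nu> {x})) = (\<Sum>A\<in>(\<lambda>x. {x}) ` F. \<bar>\<nu> A\<bar>)"
      by (subst sum.reindex) (auto simp: inj_on_def)
    also have "\<dots> \<le> tvnorm \<nu>"
      using that singleton_borel by (intro sum_abs_le_tvnorm[OF assms]) (auto simp: pairwise_def)
    finally show ?thesis .
  qed
  show summable: "(\<lambda>x. norm (\<nu> {x})) summable_on E"
    using finite_sums by (intro nonneg_bdd_above_summable_on) (auto simp: bdd_above_def)
  show "(\<Sum>\<^sub>\<infinity>x\<in>E. norm (\<nu> {x})) \<le> tvnorm \<nu>"
    using finite_sums by (intro infsum_le_finite_sums[OF summable])
qed

lemma atoms_summable:
  fixes \<nu> :: "'a::t1_space set \<Rightarrow> real"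
  assumes "\<nu> \<in> fsm"
  shows "(\<lambda>x. \<nu> {x}) summable_on E"
  by (rule abs_summable_summable[OF atoms_abs_summable(1)[OF assms]])

lemma abs_infsum_atoms_le_tvnorm:
  fixes \<nu> :: "'a::t1_space set \<Rightarrow> real"
  assumes "\<nu> \<in> fsm"
  shows "\<bar>\<Sum>\<^sub>\<infinity>x\<in>E. \<nu> {x}\<bar> \<le> tvnorm \<nu>"
  using norm_infsum_bound[OF atoms_abs_summable(1)[OF assms, of E]] atoms_abs_summable(2)[OF assms, of E]
  by simp

lemma infsum_atoms_linear:
  fixes \<nu> :: "'a::t1_space set \<Rightarrow> real"
  assumes "\<nu> \<in> fsm" "\<rho> \<in> fsm"
  shows "(\<Sum>\<^sub>\<infinity>x\<in>E. a * \<nu> {x} + b * \<rho> {x}) =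
    a * (\<Sum>\<^sub>\<infinity>x\<in>E. \<nu> {x}) + b * (\<Sum>\<^sub>\<infinity>x\<in>E. \<rho> {x})"
  using atoms_summable[OF assms(1)] atoms_summable[OF assms(2)]
  by (simp add: infsum_add summable_on_cmult_right infsum_cmult_right)

definition atoms_tensor :: "'a::topological_space set \<Rightarrow> ('a set \<Rightarrow> real) \<Rightarrow>
    (('a set \<Rightarrow> real) \<Rightarrow> ('a set \<Rightarrow> real))" where
  "atoms_tensor E \<mu> = (\<lambda>\<nu> A. (\<Sum>\<^sub>\<infinity>x\<in>E. \<nu> {x}) * \<mu> A)"

lemma bounded_op_atoms_tensor:
  fixes \<mu> :: "'a::t1_space measure"
  assumes "prob_space \<mu>" "sets \<mu> = sets (borel::'a measure)"
  shows "bounded_op (atoms_tensor E (as_fsm \<mu>))"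
  unfolding atoms_tensor_def
  by (rule bounded_op_rank_one[OF assms]) (simp_all add: infsum_atoms_linear abs_infsum_atoms_le_tvnorm)

lemma op_le_atoms_tensor:
  fixes \<mu> :: "'a::t1_space measure"
  assumes "x \<in> E"
  shows "op_le (tensor (indicator {x}) (as_fsm \<mu>)) (atoms_tensor E (as_fsm \<mu>))"
  unfolding op_le_def
proof (intro ballI allI impI)
  fix \<nu> :: "'a set \<Rightarrow> real" and A
  assume \<nu>: "\<nu> \<in> fsm" "\<forall>A. 0 \<le> \<nu> A"
  have "(\<Sum>\<^sub>\<infinity>z\<in>{x}. \<nu> {z}) \<le> (\<Sum>\<^sub>\<infinity>z\<in>E. \<nu> {z})"
    using assms \<nu> by (intro infsum_mono_neutral atoms_summable) auto
  then show "tensor (indicator {x}) (as_fsm \<mu>) \<nu> A \<le> atoms_tensor E (as_fsm \<mu>) \<nu> A"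
    by (simp add: tensor_indicator[OF \<nu>(1) singleton_borel] atoms_tensor_def mult_right_mono as_fsm_def)
qed

text \<open>Splitting off the atom at \<open>x\<close>, \<open>\<nu> = \<nu>{x} \<delta>\<^sub>x + \<nu>|\<^sub>\<Omega>\<^sub>-\<^sub>{\<^sub>x\<^sub>}\<close>, linearity of \<open>U\<close>
  and \<open>\<mu> = T\<^sub>x \<delta>\<^sub>x \<le> U \<delta>\<^sub>x\<close> reduce the claim to the remaining atoms.\<close>
lemma sum_atoms_le_upper_bound:
  fixes \<mu> :: "'a::t1_space measure" and \<nu> :: "'a set \<Rightarrow> real"
  assumes U: "bounded_op U" "\<forall>x\<in>E. op_le (tensor (indicator {x}) (as_fsm \<mu>)) U" "E \<noteq> {}"
    and "finite F" "F \<subseteq> E" "\<nu> \<in> fsm" "\<forall>B. 0 \<le> \<nu> B"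
  shows "(\<Sum>x\<in>F. \<nu> {x}) * as_fsm \<mu> A \<le> U \<nu> A"
  using assms(4-7)
proof (induction F arbitrary: \<nu> rule: finite_induct)
  case empty
  obtain x where "x \<in> E"
    using U(3) by blast
  with U(2) have "op_le (tensor (indicator {x}) (as_fsm \<mu>)) U"
    by blast
  then have "tensor (indicator {x}) (as_fsm \<mu>) \<nu> A \<le> U \<nu> A"
    by (rule op_leD[OF _ empty(2)]) (use empty(3) in blast)
  moreover have "0 \<le> \<nu> {x} * as_fsm \<mu> A"
    using empty(3) by (intro mult_nonneg_nonneg) (auto simp: as_fsm_def)
  ultimately show ?case
    by (simp add: tensor_indicator[OF empty(2) singleton_borel])
next
  case (insert x F)
  define \<rho> where "\<rho> B = (if B \<in> sets borel then \<nu> (B \<inter> - {x}) else 0)" for B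
  have \<rho>: "\<rho> \<in> fsm" "\<forall>B. 0 \<le> \<rho> B"
    unfolding \<rho>_def using fsm_restrict[OF insert(5)] singleton_borel insert(6) by auto
  have "\<nu> B = \<nu> {x} * dirac x B + 1 * \<rho> B" for B
  proof (cases "B \<in> sets borel")
    case True
    then show ?thesis
      using fsm_Diff[OF insert(5) True singleton_borel] fsm_empty[OF insert(5)]
      by (cases "x \<in> B") (auto simp: \<rho>_def dirac_borel Diff_eq)
  qed (simp add: \<rho>_def dirac_def as_fsm_def fsm_nonborel[OF insert(5)])
  then have "\<nu> = (\<lambda>B. \<nu> {x} * dirac x B + 1 * \<rho> B)"
    by (rule ext)
  moreover have "U (\<lambda>B. \<nu> {x} * dirac x B + 1 * \<rho> B) = (\<lambda>B. \<nu> {x} * U (dirac x) B + 1 * U \<rho> B)"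
    using U(1) dirac_fsm \<rho>(1) unfolding bounded_op_def by blast
  ultimately have U_split: "U \<nu> A = \<nu> {x} * U (dirac x) A + U \<rho> A"
    by simp
  have "tensor (indicator {x}) (as_fsm \<mu>) (dirac x) A \<le> U (dirac x) A"
    using U(2) insert(4) by (intro op_leD[OF _ dirac_fsm dirac_nonneg]) simp
  then have "\<nu> {x} * as_fsm \<mu> A \<le> \<nu> {x} * U (dirac x) A"
    using insert(6) by (intro mult_left_mono)
      (simp_all add: tensor_indicator[OF dirac_fsm singleton_borel] dirac_borel[OF singleton_borel])
  moreover have "{z} \<inter> - {x} = {z}" if "z \<in> F" for z
    using insert(2) that by blast
  then have "(\<Sum>z\<in>F. \<nu> {z}) = (\<Sum>z\<in>F. \<rho> {z})"
    using singleton_borel by (intro sum.cong) (auto simp: \<rho>_def)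
  moreover have "(\<Sum>z\<in>F. \<rho> {z}) * as_fsm \<mu> A \<le> U \<rho> A"
    using insert \<rho> by auto
  ultimately show ?case
    using insert(1,2) U_split by (simp add: distrib_right)
qed

lemma op_le_atoms_tensor_least:
  fixes \<mu> :: "'a::t1_space measure"
  assumes "bounded_op U" "\<forall>x\<in>E. op_le (tensor (indicator {x}) (as_fsm \<mu>)) U" "E \<noteq> {}"
  shows "op_le (atoms_tensor E (as_fsm \<mu>)) U"
  unfolding op_le_def
proof (intro ballI allI impI)
  fix \<nu> :: "'a set \<Rightarrow> real" and A
  assume \<nu>: "\<nu> \<in> fsm" "\<forall>A. 0 \<le> \<nu> A"
  note sum_le = sum_atoms_le_upper_bound[OF assms _ _ \<nu>]
  show "atoms_tensor E (as_fsm \<mu>) \<nu> A \<le> U \<nu> A"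
  proof (cases "as_fsm \<mu> A = 0")
    case True
    then show ?thesis
      using sum_le[of "{}" A] by (simp add: atoms_tensor_def)
  next
    case False
    then have pos: "0 < as_fsm \<mu> A"
      by (simp add: as_fsm_def order.strict_iff_order)
    have "(\<Sum>\<^sub>\<infinity>x\<in>E. \<nu> {x}) \<le> U \<nu> A / as_fsm \<mu> A"
      using sum_le pos by (intro infsum_le_finite_sums atoms_summable[OF \<nu>(1)]) (simp add: pos_le_divide_eq)
    with pos show ?thesis
      by (simp add: atoms_tensor_def pos_le_divide_eq)
  qed
qed

lemma is_op_sup_atoms_tensor:
  fixes \<mu> :: "'a::t1_space measure"
  assumes "prob_space \<mu>" "sets \<mu> = sets (borel::'a measure)" "E \<noteq> {}"
  shows "is_op_sup ((\<lambda>x. tensor (indicator {x}) (as_fsm \<mu>)) ` E) (atoms_tensor E (as_fsm \<mu>))"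
  unfolding is_op_sup_def
proof (intro conjI ballI allI impI)
  show "bounded_op (atoms_tensor E (as_fsm \<mu>))"
    by (rule bounded_op_atoms_tensor[OF assms(1,2)])
  show "op_le T (atoms_tensor E (as_fsm \<mu>))" if "T \<in> (\<lambda>x. tensor (indicator {x}) (as_fsm \<mu>)) ` E" for T
    using that op_le_atoms_tensor by blast
  show "op_le (atoms_tensor E (as_fsm \<mu>)) U"
    if "bounded_op U \<and> (\<forall>T\<in>(\<lambda>x. tensor (indicator {x}) (as_fsm \<mu>)) ` E. op_le T U)" for U
    using that by (intro op_le_atoms_tensor_least[OF _ _ assms(3)]) auto
qed

lemma is_op_sup_dirac_UNIV:
  fixes \<mu> :: "'a::t1_space measure"
  assumes \<mu>: "prob_space \<mu>" "sets \<mu> = sets (borel::'a measure)" and "E \<noteq> {}"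
    and S: "is_op_sup ((\<lambda>x. tensor (indicator {x}) (as_fsm \<mu>)) ` E) S"
  shows "S (dirac y) UNIV = indicator E y"
proof -
  have \<mu>_UNIV: "as_fsm \<mu> UNIV = 1"
    using prob_space.prob_space[OF \<mu>(1)] sets_eq_imp_space_eq[OF \<mu>(2)] by (simp add: as_fsm_def)
  have "op_le S (atoms_tensor E (as_fsm \<mu>))"
    using op_le_atoms_tensor by (intro is_op_sup_least[OF S bounded_op_atoms_tensor[OF \<mu>]]) blast
  then have "S (dirac y) UNIV \<le> atoms_tensor E (as_fsm \<mu>) (dirac y) UNIV"
    by (rule op_leD[OF _ dirac_fsm dirac_nonneg])
  moreover have "tensor (indicator {x}) (as_fsm \<mu>) (dirac y) UNIV \<le> S (dirac y) UNIV" if "x \<in> E" for x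
    using that by (intro op_leD[OF is_op_sup_upper[OF S] dirac_fsm dirac_nonneg]) blast
  moreover have "(\<Sum>\<^sub>\<infinity>x\<in>E. dirac y {x}) = indicator E y"
  proof (cases "y \<in> E")
    case True
    then have "(\<Sum>\<^sub>\<infinity>x\<in>E. dirac y {x}) = (\<Sum>\<^sub>\<infinity>x\<in>{y}. dirac y {x})"
      by (intro infsum_cong_neutral) (auto simp: dirac_borel[OF singleton_borel])
    with True show ?thesis
      by (simp add: dirac_borel[OF singleton_borel])
  next
    case False
    then have "(\<Sum>\<^sub>\<infinity>x\<in>E. dirac y {x}) = 0"
      by (intro infsum_0) (auto simp: dirac_borel[OF singleton_borel] indicator_def)
    with False show ?thesis
      by simp
  qed
  ultimately have upper: "S (dirac y) UNIV \<le> indicator E y"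
    and lower: "\<And>x. x \<in> E \<Longrightarrow> indicator {x} y \<le> S (dirac y) UNIV"
    using \<mu>_UNIV by (simp_all add: tensor_indicator[OF dirac_fsm singleton_borel]
      dirac_borel[OF singleton_borel] atoms_tensor_def)
  show ?thesis
  proof (cases "y \<in> E")
    case True
    then show ?thesis
      using upper lower[of y] by simp
  next
    case False
    obtain x where "x \<in> E"
      using assms(3) by blast
    with False have "x \<noteq> y"
      by blast
    with False show ?thesis
      using upper lower[OF \<open>x \<in> E\<close>] by simp
  qed
qed

lemma weakly_cont_dirac_measurable:
  fixes T :: "('a::topological_space set \<Rightarrow> real) \<Rightarrow> ('a set \<Rightarrow> real)"
  assumes "weakly_cont T" "A \<in> sets borel"
  shows "(\<lambda>y. T (dirac y) A) \<in> borel_measurable borel"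
proof -
  obtain k where k: "bounded_kernel k" "\<And>\<nu>. \<nu> \<in> fsm \<Longrightarrow> T \<nu> A = sint \<nu> (\<lambda>x. k x A)"
    using assms unfolding weakly_cont_def by blast
  obtain C where "\<And>x. tvnorm (k x) \<le> C"
    using k(1) unfolding bounded_kernel_def by blast
  then have "\<bar>k x A\<bar> \<le> C" for x
    using abs_le_tvnorm[OF _ assms(2)] k(1) unfolding bounded_kernel_def by (meson order_trans)
  moreover have measurable: "(\<lambda>x. k x A) \<in> borel_measurable borel"
    using k(1) assms(2) unfolding bounded_kernel_def by blast
  ultimately have "T (dirac y) A = k y A" for y
    using k(2)[OF dirac_fsm] sint_dirac by metis
  with measurable show ?thesis
    by simp
qed

lemma is_op_sup_not_weakly_cont:
  fixes E :: "'a::t1_space set" and \<mu> :: "'a measure"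
  assumes "E \<notin> sets borel" "prob_space \<mu>" "sets \<mu> = sets (borel::'a measure)"
    and sup: "is_op_sup ((\<lambda>x. tensor (indicator {x}) (as_fsm \<mu>)) ` E) S"
  shows "\<not> weakly_cont S"
proof
  assume "weakly_cont S"
  have "E \<noteq> {}"
    using assms(1) by auto
  then have "(\<lambda>y. S (dirac y) UNIV) = indicator E"
    by (intro ext is_op_sup_dirac_UNIV[OF assms(2,3) _ sup])
  moreover have "(\<lambda>y. S (dirac y) UNIV) \<in> borel_measurable borel"
    by (rule weakly_cont_dirac_measurable[OF \<open>weakly_cont S\<close>]) simp
  ultimately have "(indicator E :: 'a \<Rightarrow> real) \<in> borel_measurable borel"
    by simp
  with assms(1) show False
    by (simp add: borel_measurable_indicator_iff)
qed

theorem mainTheorem9: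
  fixes E :: "'a::polish_space set" and \<mu> :: "'a measure"
  assumes "E \<notin> sets (borel::'a measure)"
    and "prob_space \<mu>" and "sets \<mu> = sets (borel::'a measure)"
  shows "(\<forall>x\<in>E. weakly_cont (tensor (indicator {x}) (as_fsm \<mu>)))
    \<and> weakly_cont (tensor (\<lambda>_. 1) (as_fsm \<mu>))
    \<and> (\<forall>x\<in>E. op_le (tensor (indicator {x}) (as_fsm \<mu>)) (tensor (\<lambda>_. 1) (as_fsm \<mu>)))
    \<and> (\<exists>S. is_op_sup ((\<lambda>x. tensor (indicator {x}) (as_fsm \<mu>)) ` E) S)
    \<and> (\<forall>S. is_op_sup ((\<lambda>x. tensor (indicator {x}) (as_fsm \<mu>)) ` E) S \<longrightarrow> \<not> weakly_cont S)"
proof -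
  note \<mu> = assms(2,3)
  have UNIV_borel: "UNIV \<in> sets (borel :: 'a measure)"
    by simp
  have "E \<noteq> {}"
    using assms(1) by auto
  then show ?thesis
    unfolding indicator_UNIV[symmetric]
    using weakly_cont_tensor_indicator[OF \<mu> singleton_borel] weakly_cont_tensor_indicator[OF \<mu> UNIV_borel]
      op_le_tensor_indicator[OF singleton_borel UNIV_borel] is_op_sup_atoms_tensor[OF \<mu>]
      is_op_sup_not_weakly_cont[OF assms]
    by blast
qed

end
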